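(* Let $n_j:=2^{2^j}$ and $t_n:=1/n$. For $i>j\ge100$ and $0\le k\le n_j$ we have $f_{n_i}(t_{n_j})=0$ and $f_{n_i}(x_{k,n_j})=0$.
   Context: Nodes: $x_{k,n}:=2k/n-1$, $k=0,\dots,n$. For $m$ such that $\sqrt m$ is an integer multiple of $4$, define $f_m:\mathbb{R}\to\mathbb{R}$ by: $f_m(x)=0$ for $x<1/m$ or $x\ge(\sqrt m-3)/m$; $f_m(x)=x-1/m$ for $1/m\le x<2/m$; $f_m(x)=\frac{4p+3}{m}-x$ for $0\le p\le\frac{\sqrt m-8}{4}$ and $\frac{4p+2}{m}\le x<\frac{4p+4}{m}$; $f_m(x)=x-\frac{4p+1}{m}$ for $1\le p\le\frac{\sqrt m-8}{4}$ and $\frac{4p}{m}\le x<\frac{4p+2}{m}$; $f_m(x)=x-\frac{\sqrt m-3}{m}$ for $\frac{\sqrt m-4}{m}\le x<\frac{\sqrt m-3}{m}$. *)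

theory Defs
  imports Complex_Main
begin

definition node :: "nat \<Rightarrow> nat \<Rightarrow> real" where
  "node k n = 2 * real k / real n - 1"

text \<open>The piecewise linear function f_m (intended for m with sqrt m an integer
multiple of 4). The pieces are pairwise disjoint and cover the real line,
so the order of the tests below is immaterial; in the two families of pieces
indexed by p the index p is the unique one whose interval contains x.\<close>
definition fm :: "nat \<Rightarrow> real \<Rightarrow> real" where
  "fm m x = (let s = sqrt (real m); M = real m in
     if x < 1 / M \<or> x \<ge> (s - 3) / M then 0
     else if 1 / M \<le> x \<and> x < 2 / M then x - 1 / M
     else if (\<exists>p::nat. real p \<le> (s - 8) / 4 \<and> (4 * real p + 2) / M \<le> x \<and> x < (4 * real p + 4) / M)
       then (4 * real (THE p::nat. real p \<le> (s - 8) / 4 \<and> (4 * real p + 2) / M \<le> x \<and> x < (4 * real p + 4) / M) + 3) / M - x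
     else if (\<exists>p::nat. 1 \<le> p \<and> real p \<le> (s - 8) / 4 \<and> (4 * real p) / M \<le> x \<and> x < (4 * real p + 2) / M)
       then x - (4 * real (THE p::nat. 1 \<le> p \<and> real p \<le> (s - 8) / 4 \<and> (4 * real p) / M \<le> x \<and> x < (4 * real p + 2) / M) + 1) / M
     else if (s - 4) / M \<le> x \<and> x < (s - 3) / M then x - (s - 3) / M
     else 0)"

definition nn :: "nat \<Rightarrow> nat" where
  "nn j = 2 ^ (2 ^ j)"

end

theory Submission
  imports Defs
begin

text \<open>All pieces of \<open>f\<^sub>m\<close> live in \<open>[1/m, (\<surd>m - 3)/m) \<subseteq> [1/m, 1/\<surd>m)\<close>. Since \<open>n\<^sub>j\<^sup>2 \<le> n\<^sub>i\<close>,
this support lies strictly between \<open>0\<close> and \<open>1/n\<^sub>j\<close>, while every node \<open>2k/n\<^sub>j - 1\<close> is either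
\<open>\<le> 0\<close> or \<open>\<ge> 1/n\<^sub>j\<close>.\<close>

lemma fm_eq_0_below: "x < 1 / real m \<Longrightarrow> fm m x = 0"
  unfolding fm_def Let_def by simp

lemma fm_eq_0_above: "(sqrt (real m) - 3) / real m \<le> x \<Longrightarrow> fm m x = 0"
  unfolding fm_def Let_def by simp

lemma fm_eq_0_if_inverse_le:
  assumes "0 < n" and "n * n \<le> m" and "1 / real n \<le> x"
  shows "fm m x = 0"
proof (rule fm_eq_0_above)
  have "real n \<le> sqrt (real m)"
    using assms(2) by (metis of_nat_mono of_nat_mult power2_eq_square real_le_rsqrt)
  then have "real n * sqrt (real m) \<le> sqrt (real m) * sqrt (real m)"
    by (rule mult_right_mono) simp_all
  moreover have "0 < m"
    using assms(1,2) by (metis less_le_trans nat_0_less_mult_iff)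
  ultimately have "sqrt (real m) / real m \<le> 1 / real n"
    using assms(1) by (simp add: field_simps)
  then show "(sqrt (real m) - 3) / real m \<le> x"
    using assms(3) by (smt (verit) divide_right_mono of_nat_0_le_iff)
qed

lemma node_le_0_or_inverse_le:
  assumes "0 < n"
  shows "node k n \<le> 0 \<or> 1 / real n \<le> node k n"
proof (cases "2 * k \<le> n")
  case True
  then show ?thesis
    using assms by (simp add: node_def field_simps)
next
  case False
  then have "real n + 1 \<le> 2 * real k" by linarith
  then show ?thesis
    using assms by (simp add: node_def field_simps)
qed

lemma fm_node_eq_0:
  assumes "0 < n" and "n * n \<le> m"
  shows "fm m (node k n) = 0"
  using node_le_0_or_inverse_le[OF assms(1), of k]
proof
  assume "node k n \<le> 0"
  moreover have "0 < m"
    using assms by (metis less_le_trans nat_0_less_mult_iff)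
  ultimately show ?thesis
    by (intro fm_eq_0_below) (simp add: order_le_less_trans)
next
  assume "1 / real n \<le> node k n"
  with assms show ?thesis
    by (rule fm_eq_0_if_inverse_le)
qed

lemma nn_pos: "0 < nn j"
  by (simp add: nn_def)

lemma nn_square_le:
  assumes "j < i"
  shows "nn j * nn j \<le> nn i"
proof -
  have "nn j * nn j = 2 ^ 2 ^ Suc j"
    by (simp add: nn_def power_add[symmetric])
  also have "\<dots> \<le> nn i"
    unfolding nn_def using assms by (intro power_increasing) simp_all
  finally show ?thesis .
qed

theorem lemma3:
  fixes i j k :: nat
  assumes "i > j" and "j \<ge> 100" and "k \<le> nn j"
  shows "fm (nn i) (1 / real (nn j)) = 0 \<and> fm (nn i) (node k (nn j)) = 0"
  using fm_eq_0_if_inverse_le[OF nn_pos nn_square_le] fm_node_eq_0[OF nn_pos nn_square_le] assms(1)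
  by simp

end
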